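(* Let $f$ be a quadratic form in $s$ variables with integer coefficients and $\mathrm{rank}_{\mathrm{off}}(f)\ge5$. Let $W,q$ be positive integers and $b$ an integer with $\gcd(b,W)=1$. Then for every $\varepsilon>0$, $$B^\ast_{W,b}(q)\ll_{f,\varepsilon}\frac{W^5}{\phi(W)^s}q^{-\frac32+\varepsilon}.$$
   Context: $\mathrm{rank}_{\mathrm{off}}(f)$ for $f(\mathbf{x})=\mathbf{x}M\mathbf{x}^T$ is the maximal rank of a submatrix $(a_{i_k,j_l})_{1\le k,l\le r}$ of $M$ with $\{i_1,\ldots,i_r\}\cap\{j_1,\ldots,j_r\}=\emptyset$. $e(z)=e^{2\pi iz}$, $\phi$ Euler's totient. $S^\ast_{W,b}(q,a)=\sum e(af(\mathbf{c})/q)$ over $1\le c_1,\ldots,c_s\le qW$ with $\gcd(c_j,q)=1$ and $c_j\equiv b\pmod W$ for all $j$, and $B^\ast_{W,b}(q)=\phi(qW)^{-s}\sum_{1\le a\le q,\ \gcd(a,q)=1}S^\ast_{W,b}(q,a)$. *)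

theory Defs
  imports Complex_Main "HOL-Number_Theory.Number_Theory" "Jordan_Normal_Form.DL_Rank"
begin

definition qform :: "nat \<Rightarrow> (nat \<Rightarrow> nat \<Rightarrow> real) \<Rightarrow> (nat \<Rightarrow> int) \<Rightarrow> real" where
  "qform s M x = (\<Sum>i<s. \<Sum>j<s. M i j * of_int (x i) * of_int (x j))"

definition rank_off :: "nat \<Rightarrow> (nat \<Rightarrow> nat \<Rightarrow> real) \<Rightarrow> nat" where
  "rank_off s M = Max {vec_space.rank r (mat r r (\<lambda>(k, l). M (I k) (J l)) :: real mat) | r I J.
      inj_on I {..<r} \<and> inj_on J {..<r} \<and> I ` {..<r} \<subseteq> {..<s} \<and> J ` {..<r} \<subseteq> {..<s}
      \<and> I ` {..<r} \<inter> J ` {..<r} = {}}"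

definition e :: "real \<Rightarrow> complex" where
  "e z = exp (2 * of_real pi * \<i> * of_real z)"

definition S_star :: "nat \<Rightarrow> (nat \<Rightarrow> nat \<Rightarrow> real) \<Rightarrow> nat \<Rightarrow> int \<Rightarrow> nat \<Rightarrow> int \<Rightarrow> complex" where
  "S_star s M W b q a = (\<Sum>c \<in> PiE {..<s} (\<lambda>_. {c. 1 \<le> c \<and> c \<le> int (q * W) \<and>
        coprime c (int q) \<and> [c = b] (mod int W)}).
      e (of_int a * qform s M c / of_nat q))"

definition B_star :: "nat \<Rightarrow> (nat \<Rightarrow> nat \<Rightarrow> real) \<Rightarrow> nat \<Rightarrow> int \<Rightarrow> nat \<Rightarrow> complex" where
  "B_star s M W b q = (\<Sum>a \<in> {a. 1 \<le> a \<and> a \<le> int q \<and> coprime a (int q)}. S_star s M W b q a)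
      / of_nat (totient (q * W)) ^ s"

end

theory Submission
  imports Defs "HOL-Analysis.Convex"
begin

text \<open>
  Since rank_off f \<ge> 5, there are disjoint index sets A and B with |B| = 5 such that the
  integer matrix 2M restricted to A \<times> B has an integral left inverse up to a factor D \<noteq> 0.
  Split f(c) into a part free of the B-variables, a part free of the A-variables and the cross
  term 2 \<Sum> M i j c i c j over A \<times> B. For fixed values of the remaining variables, apply
  Cauchy--Schwarz to the A-variables and extend their range to the full residue class of b modulo W:
  what remains are complete geometric sums, which vanish unless q divides W (2M)(y - y') on A.
  By the left inverse this confines y' to at most (|D| W^2)^5 choices for each y. Writing X for the
  set of admissible residues, this gives
  |S*(q,a)| \<le> |X|^s (|D|^5 W^10 q^|A| / |X|^(|A|+5))^(1/2),
  and the claim follows from |X| \<phi>(W) = \<phi>(qW) and |X| \<ge> \<phi>(q) \<ge> c_\<delta> q^(1-\<delta>),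
  after summing over the at most q values of a.
\<close>

section \<open>Euler's totient\<close>

lemma prod_prime_factors_le:
  fixes n :: nat
  assumes "n > 0"
  shows "(\<Prod>p\<in>prime_factors n. p) \<le> n"
proof -
  have "(\<Prod>p\<in>prime_factors n. p) \<le> (\<Prod>p\<in>prime_factors n. p ^ multiplicity p n)"
    by (intro prod_mono) (auto simp: prime_factors_multiplicity prime_ge_Suc_0_nat intro: self_le_power)
  also have "\<dots> = n"
    using assms by (simp add: prime_factorization_nat[symmetric])
  finally show ?thesis .
qed

lemma prime_powr_neg_le:
  fixes \<delta> :: real
  assumes "prime p" and "\<delta> > 0"
  shows "real p powr (-\<delta>) / 2 \<le> 1 - 1 / real p"
    and "2 powr (1 / \<delta>) < real p \<Longrightarrow> real p powr (-\<delta>) \<le> 1 - 1 / real p"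
proof -
  have p2: "real p \<ge> 2" using prime_ge_2_nat[OF assms(1)] by simp
  then have half: "1/2 \<le> 1 - 1 / real p" by (simp add: field_simps)
  have "real p powr (-\<delta>) \<le> 1"
    using p2 assms(2) by (simp add: powr_minus_divide ge_one_powr_ge_zero)
  then show "real p powr (-\<delta>) / 2 \<le> 1 - 1 / real p" using half by linarith
  assume "2 powr (1 / \<delta>) < real p"
  then have "(2 powr (1 / \<delta>)) powr \<delta> < real p powr \<delta>"
    using assms(2) by (intro powr_less_mono2) auto
  then have "real p powr \<delta> > 2" using assms(2) by (simp add: powr_powr)
  then have "real p powr (-\<delta>) < 1/2" using p2 by (simp add: powr_minus_divide divide_simps)
  then show "real p powr (-\<delta>) \<le> 1 - 1 / real p" using half by linarith
qed

lemma totient_ge_powr: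
  fixes \<delta> :: real
  assumes "\<delta> > 0"
  obtains c where "c > 0" and "\<And>n. n > 0 \<Longrightarrow> c * real n powr (1 - \<delta>) \<le> real (totient n)"
proof -
  define P where "P = nat \<lceil>2 powr (1 / \<delta>)\<rceil>"
  \<comment> \<open>Each prime factor p of n contributes a factor 1 - 1/p to totient n / n; this is at least
      p powr -\<delta> for p > P, and at least half of that for the at most P + 1 primes below.\<close>
  have factor: "(if p \<le> P then 1/2 else 1) * real p powr (-\<delta>) \<le> 1 - 1 / real p"
    if "prime p" for p
  proof (cases "p \<le> P")
    case True
    then show ?thesis using prime_powr_neg_le(1)[OF that assms] by simp
  next
    case False
    then have "2 powr (1 / \<delta>) < real p" unfolding P_def by linarith
    then show ?thesis using prime_powr_neg_le(2)[OF that assms] False by simp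
  qed
  have "(1/2) ^ Suc P * real n powr (1 - \<delta>) \<le> real (totient n)" if n: "n > 0" for n
  proof -
    let ?P = "prime_factors n"
    have "card (?P \<inter> {..P}) \<le> Suc P" using card_mono[of "{..P}" "?P \<inter> {..P}"] by auto
    then have "(1/2) ^ Suc P \<le> (1/2::real) ^ card (?P \<inter> {..P})"
      by (intro power_decreasing) auto
    moreover have "real n powr (-\<delta>) \<le> (\<Prod>p\<in>?P. real p) powr (-\<delta>)"
      using prod_prime_factors_le[OF n] assms
      by (intro powr_mono2') (auto intro!: prod_pos simp: prime_factors_multiplicity prime_gt_0_nat
                                    simp flip: of_nat_prod)
    ultimately have "(1/2) ^ Suc P * real n powr (-\<delta>)
        \<le> (1/2) ^ card (?P \<inter> {..P}) * (\<Prod>p\<in>?P. real p) powr (-\<delta>)"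
      by (intro mult_mono) auto
    also have "\<dots> = (\<Prod>p\<in>?P. (if p \<le> P then 1/2 else 1) * real p powr (-\<delta>))"
      by (simp add: prod.distrib prod.If_cases Int_def atMost_def prod_powr_distrib)
    also have "\<dots> \<le> (\<Prod>p\<in>?P. 1 - 1 / real p)"
      by (intro prod_mono conjI factor) (auto simp: prime_factors_multiplicity)
    finally have "real n * ((1/2) ^ Suc P * real n powr (-\<delta>)) \<le> real n * (\<Prod>p\<in>?P. 1 - 1 / real p)"
      by (intro mult_left_mono) auto
    then show ?thesis
      using n by (simp add: totient_formula2 powr_diff powr_minus_divide field_simps)
  qed
  moreover have "(1/2::real) ^ Suc P > 0" by (simp del: power_Suc)
  ultimately show ?thesis using that by blast
qed

lemma totient_mult_ge: "totient q * totient W \<le> totient (q * W)"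
proof (cases "q = 0 \<or> W = 0")
  case False
  then have "totient (gcd q W) > 0" by simp
  moreover have "totient q * totient W * totient (gcd q W) \<le> totient (q * W) * totient (gcd q W)"
    using totient_gcd[of q W] by (simp add: totient_le)
  ultimately show ?thesis by simp
qed auto

section \<open>Admissible residues\<close>

definition admissible :: "nat \<Rightarrow> nat \<Rightarrow> int \<Rightarrow> int set" where
  "admissible q W b = {c. 1 \<le> c \<and> c \<le> int (q * W) \<and> coprime c (int q) \<and> [c = b] (mod int W)}"

lemma finite_admissible [simp]: "finite (admissible q W b)"
  unfolding admissible_def by (rule finite_subset[of _ "{1..int (q * W)}"]) auto

lemma shifted_mod_representative:
  fixes x N :: int
  assumes "N > 0"
  shows "1 \<le> (x - 1) mod N + 1" and "(x - 1) mod N + 1 \<le> N" and "[(x - 1) mod N + 1 = x] (mod N)"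
proof -
  show "1 \<le> (x - 1) mod N + 1" "(x - 1) mod N + 1 \<le> N"
    using assms pos_mod_sign[of N "x - 1"] pos_mod_bound[of N "x - 1"] by linarith+
  have "((x - 1) mod N + 1) mod N = ((x - 1) + 1) mod N" by (rule mod_add_left_eq)
  then show "[(x - 1) mod N + 1 = x] (mod N)" unfolding cong_def by simp
qed

lemma cong_in_range_imp_eq:
  fixes x y N :: int
  assumes "[x = y] (mod N)" "1 \<le> x" "x \<le> N" "1 \<le> y" "y \<le> N"
  shows "x = y"
proof -
  have "[x - 1 = y - 1] (mod N)" using assms(1) by (simp add: cong_diff)
  then show ?thesis using assms(2-) cong_less_imp_eq_int[of "x - 1" N "y - 1"] by simp
qed

lemma exists_coprime_in_class:
  fixes v :: int and W q :: nat
  assumes "q > 0" and "coprime v (int W)"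
  obtains t where "[t = v] (mod int W)" and "coprime t (int q)"
proof -
  \<comment> \<open>Shift v by W times the primes of q not dividing v.\<close>
  define P where "P = {p \<in> prime_factors (int q). \<not> p dvd v}"
  define t where "t = v + int W * \<Prod>P"
  have finP: "finite P" and primeP: "\<And>p. p \<in> P \<Longrightarrow> prime p"
    unfolding P_def by (auto simp: in_prime_factors_iff)
  have no_common_prime: "\<not> p dvd t" if p: "prime p" "p dvd int q" for p
  proof
    assume "p dvd t"
    show False
    proof (cases "p dvd v")
      case True
      then have "p dvd int W * \<Prod>P" using \<open>p dvd t\<close> unfolding t_def by (simp add: dvd_add_right_iff)
      moreover have "\<not> p dvd int W" using True assms(2) p(1) by (meson not_coprimeI not_prime_unit)
      ultimately have "p dvd \<Prod>P" using p(1) prime_dvd_mult_iff by blast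
      then obtain p' where "p' \<in> P" "p dvd p'" using prime_dvd_prod_iff[OF finP p(1), of id] by auto
      then have "p = p'" using primeP p(1) primes_dvd_imp_eq by blast
      then show False using True \<open>p' \<in> P\<close> unfolding P_def by simp
    next
      case False
      then have "p \<in> P" using p assms(1) unfolding P_def by (simp add: in_prime_factors_iff)
      then have "p dvd int W * \<Prod>P" using dvd_prodI[OF finP, of p "\<lambda>x. x"] by (simp add: dvd_mult)
      then show False using False \<open>p dvd t\<close> unfolding t_def by (simp add: dvd_add_left_iff)
    qed
  qed
  have "coprime t (int q)"
  proof (rule ccontr)
    assume "\<not> coprime t (int q)"
    then obtain d where d: "d dvd t" "d dvd int q" "\<not> is_unit d" by (rule not_coprimeE)
    moreover have "d \<noteq> 0" using d(2) assms(1) by auto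
    ultimately obtain p where "prime p" "p dvd d" using prime_divisor_exists by blast
    then show False using no_common_prime d(1,2) dvd_trans by blast
  qed
  moreover have "[t = v] (mod int W)" unfolding t_def by (simp add: cong_iff_dvd_diff)
  ultimately show ?thesis using that by blast
qed

lemma card_admissible_le:
  fixes b u :: int and q W :: nat
  assumes q: "q > 0" and W: "W > 0" and b: "coprime b (int W)" and u: "coprime u (int W)"
  shows "card (admissible q W b) \<le> card (admissible q W u)"
proof -
  define N where "N = int (q * W)"
  have N: "N > 0" using q W by (simp add: N_def)
  obtain b' where b': "[b * b' = 1] (mod int W)" using cong_solve_coprime_int[OF b] by auto
  have "coprime b' (int W)"
    using b' by (metis coprime_1_left coprime_cong_transfer_left coprime_mult_left_iff cong_sym)
  then obtain t where t: "[t = u * b'] (mod int W)" "coprime t (int q)"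
    using exists_coprime_in_class[OF q, of "u * b'"] u by auto
  have "coprime t (int W)"
    using t(1) u \<open>coprime b' (int W)\<close> by (metis coprime_cong_transfer_left coprime_mult_left_iff cong_sym)
  with t(2) have tN: "coprime t N" by (simp add: N_def)
  \<comment> \<open>Multiplication by t permutes the units modulo qW and sends the class of b to that of u.\<close>
  define g where "g c = (t * c - 1) mod N + 1" for c
  have g: "1 \<le> g c" "g c \<le> N" "[g c = t * c] (mod N)" for c
    unfolding g_def using shifted_mod_representative[OF N] by auto
  have "inj_on g (admissible q W b)"
  proof (rule inj_onI)
    fix c1 c2 assume c: "c1 \<in> admissible q W b" "c2 \<in> admissible q W b" "g c1 = g c2"
    have "[t * c1 = t * c2] (mod N)" using g(3)[of c1] g(3)[of c2] c(3) by (metis cong_sym cong_trans)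
    then have "[c1 = c2] (mod N)" using cong_mult_lcancel[OF tN] by blast
    then show "c1 = c2" using c(1,2) cong_in_range_imp_eq unfolding admissible_def N_def by auto
  qed
  moreover have "g c \<in> admissible q W u" if c: "c \<in> admissible q W b" for c
  proof -
    have gq: "[g c = t * c] (mod int q)" and gW: "[g c = t * c] (mod int W)"
      using g(3)[of c] unfolding N_def by (metis cong_dvd_modulus dvd_triv_left dvd_triv_right of_nat_mult)+
    have "coprime (t * c) (int q)" using t(2) c unfolding admissible_def by simp
    then have "coprime (g c) (int q)" using gq coprime_cong_transfer_left cong_sym by blast
    moreover have "[t * c = u * (b * b')] (mod int W)"
      using cong_mult[OF t(1), of c b] c unfolding admissible_def by (simp add: ac_simps)
    moreover have "[u * (b * b') = u] (mod int W)" using cong_scalar_left[OF b', of u] by simp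
    ultimately show ?thesis using g(1,2) gW unfolding admissible_def N_def by (auto intro: cong_trans)
  qed
  ultimately show ?thesis by (intro card_inj_on_le[of g]) auto
qed

lemma int_totatives_iff:
  "c \<in> int ` totatives n \<longleftrightarrow> 1 \<le> c \<and> c \<le> int n \<and> coprime c (int n)"
proof
  assume "1 \<le> c \<and> c \<le> int n \<and> coprime c (int n)"
  then have "nat c \<in> totatives n" and "c = int (nat c)"
    by (auto simp: totatives_def simp flip: coprime_int_iff)
  then show "c \<in> int ` totatives n" by blast
qed (auto simp: totatives_def)

lemma card_admissible:
  fixes b :: int and q W :: nat
  assumes q: "q > 0" and W: "W > 0" and b: "coprime b (int W)"
  shows "card (admissible q W b) * totient W = totient (q * W)"
proof -
  define U where "U = int ` totatives W"
  have U: "1 \<le> u" "u \<le> int W" "coprime u (int W)" if "u \<in> U" for u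
    using that unfolding U_def int_totatives_iff by auto
  have same_card: "card (admissible q W u) = card (admissible q W b)" if "u \<in> U" for u
    using card_admissible_le[OF q W] b U(3)[OF that] by (meson le_antisym)
  have partition: "int ` totatives (q * W) = (\<Union>u\<in>U. admissible q W u)"
  proof (intro equalityI subsetI)
    fix c assume "c \<in> int ` totatives (q * W)"
    then have c: "1 \<le> c" "c \<le> int (q * W)" "coprime c (int q)" "coprime c (int W)"
      unfolding int_totatives_iff by auto
    define u where "u = (c - 1) mod int W + 1"
    have u: "1 \<le> u" "u \<le> int W" "[u = c] (mod int W)"
      unfolding u_def using shifted_mod_representative W by auto
    then have "u \<in> U"
      using c(4) unfolding U_def int_totatives_iff by (metis coprime_cong_transfer_left cong_sym)
    moreover have "c \<in> admissible q W u" using c u(3) by (simp add: admissible_def cong_sym)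
    ultimately show "c \<in> (\<Union>u\<in>U. admissible q W u)" by blast
  next
    fix c assume "c \<in> (\<Union>u\<in>U. admissible q W u)"
    then obtain u where "u \<in> U" and c: "c \<in> admissible q W u" by blast
    then have "coprime c (int W)"
      using U(3) unfolding admissible_def by (metis (mono_tags) coprime_cong_transfer_left cong_sym mem_Collect_eq)
    then show "c \<in> int ` totatives (q * W)" using c unfolding admissible_def int_totatives_iff by simp
  qed
  have disjoint: "admissible q W u1 \<inter> admissible q W u2 = {}"
    if "u1 \<in> U" "u2 \<in> U" "u1 \<noteq> u2" for u1 u2
  proof -
    have "\<not> [u1 = u2] (mod int W)" using that U cong_in_range_imp_eq by blast
    then show ?thesis unfolding admissible_def by (auto dest: cong_sym cong_trans)
  qed
  have "totient (q * W) = card (int ` totatives (q * W))" by (simp add: totient_def card_image)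
  also have "\<dots> = (\<Sum>u\<in>U. card (admissible q W u))"
    unfolding partition by (intro card_UN_disjoint) (auto simp: U_def disjoint)
  also have "\<dots> = card U * card (admissible q W b)" using same_card by simp
  also have "card U = totient W" by (simp add: U_def totient_def card_image)
  finally show ?thesis by simp
qed

lemma totient_le_card_admissible:
  assumes "q > 0" "W > 0" "coprime b (int W)"
  shows "totient q \<le> card (admissible q W b)"
proof -
  have "totient q * totient W \<le> card (admissible q W b) * totient W"
    using totient_mult_ge[of q W] card_admissible[OF assms] by simp
  then show ?thesis using assms(2) by simp
qed

section \<open>Exponential sums\<close>

lemma e_conv_cis: "e x = cis (2 * pi * x)"
  unfolding e_def cis_conv_exp by (simp add: ac_simps)

lemma e_zero [simp]: "e 0 = 1"
  by (simp add: e_def)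

lemma e_add: "e (x + y) = e x * e y"
  by (simp add: e_conv_cis cis_mult distrib_left)

lemma e_diff: "e (x - y) = e x * cnj (e y)"
  by (simp add: e_conv_cis cis_cnj cis_mult right_diff_distrib)

lemma norm_e [simp]: "norm (e x) = 1"
  by (simp add: e_conv_cis)

lemma e_of_int: "e (of_int n) = 1"
  unfolding e_conv_cis by (rule cis_multiple_2pi) simp

lemma e_power: "e x ^ n = e (real n * x)"
  by (simp add: e_conv_cis DeMoivre ac_simps)

lemma e_sum: "finite I \<Longrightarrow> e (\<Sum>i\<in>I. f i) = (\<Prod>i\<in>I. e (f i))"
  by (induction I rule: finite_induct) (simp_all add: e_add)

lemma e_eq_1_imp_Ints: "e x = 1 \<Longrightarrow> x \<in> \<int>"
proof -
  assume "e x = 1"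
  then have "cos (2 * pi * x) = 1" unfolding e_conv_cis by (metis cis.sel(1) one_complex.sel(1))
  then obtain n :: int where "2 * pi * x = real_of_int n * 2 * pi" using cos_one_2pi_int by blast
  then show "x \<in> \<int>" by simp
qed

lemma sum_e_multiples:
  fixes m :: int and q :: nat
  assumes q: "q > 0"
  shows "(\<Sum>u<q. e (of_int m * real u / real q)) = (if int q dvd m then of_nat q else 0)"
proof (cases "int q dvd m")
  case True
  then obtain k where "m = int q * k" by auto
  have "e (of_int m * real u / real q) = 1" for u
  proof -
    have "of_int m * real u / real q = of_int (k * int u)" using q \<open>m = int q * k\<close> by simp
    then show ?thesis by (simp only: e_of_int)
  qed
  then show ?thesis using True by simp
next
  case False
  define z where "z = e (of_int m / real q)"
  have "z \<noteq> 1"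
  proof
    assume "z = 1"
    then obtain k :: int where "of_int m / real q = of_int k"
      unfolding z_def by (auto dest: e_eq_1_imp_Ints elim: Ints_cases)
    then have "of_int m = real q * of_int k" using q by (simp add: field_simps)
    then have "m = int q * k" by (metis of_int_eq_iff of_int_mult of_int_of_nat_eq)
    then show False using False by simp
  qed
  moreover have "z ^ q = 1" unfolding z_def e_power using q by (simp add: e_of_int)
  moreover have "e (of_int m * real u / real q) = z ^ u" for u
    unfolding z_def e_power by (simp add: ac_simps)
  ultimately show ?thesis using False by (simp add: sum_gp_strict)
qed

text \<open>The q integers in [1, qW] congruent to b modulo W, parametrised by u < q: dropping the
  coprimality condition of admissible residues makes sums over this set geometric.\<close>

definition residue_class :: "nat \<Rightarrow> nat \<Rightarrow> int \<Rightarrow> int set" where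
  "residue_class q W b = (\<lambda>u. ((b - 1) mod int W + 1) + int W * int u) ` {..<q}"

lemma finite_residue_class [simp]: "finite (residue_class q W b)"
  unfolding residue_class_def by simp

lemma admissible_subset_residue_class:
  assumes W: "W > 0"
  shows "admissible q W b \<subseteq> residue_class q W b"
proof
  fix c assume "c \<in> admissible q W b"
  then have c: "1 \<le> c" "c \<le> int W * int q" "[c = b] (mod int W)"
    unfolding admissible_def by (auto simp: ac_simps)
  define b0 where "b0 = (b - 1) mod int W + 1"
  have b0: "1 \<le> b0" "b0 \<le> int W" "[b0 = b] (mod int W)"
    unfolding b0_def using shifted_mod_representative W by auto
  then have "int W dvd c - b0" using c(3) by (metis cong_iff_dvd_diff cong_sym cong_trans)
  then obtain k where "c - b0 = int W * k" by (rule dvdE)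
  then have k: "c = b0 + int W * k" by simp
  have "int W * (-1) < int W * k" "int W * k < int W * int q" using k c b0 by linarith+
  then have "-1 < k" "k < int q" using W by (metis mult_less_cancel_left_pos of_nat_0_less_iff)+
  then have "c = b0 + int W * int (nat k)" "nat k \<in> {..<q}" using k by auto
  then show "c \<in> residue_class q W b" unfolding residue_class_def b0_def by blast
qed

lemma norm_sum_residue_class_e:
  fixes a L b :: int
  assumes q: "q > 0" and W: "W > 0" and a: "coprime a (int q)"
  shows "norm (\<Sum>t\<in>residue_class q W b. e (of_int (a * t * L) / real q))
    = (if int q dvd int W * L then real q else 0)"
proof -
  define b0 where "b0 = (b - 1) mod int W + 1"
  have inj: "inj_on (\<lambda>u. b0 + int W * int u) {..<q}" using W by (auto simp: inj_on_def)
  have "(\<Sum>t\<in>residue_class q W b. e (of_int (a * t * L) / real q))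
      = (\<Sum>u<q. e (of_int (a * b0 * L) / real q) * e (of_int (a * int W * L) * real u / real q))"
    unfolding residue_class_def b0_def[symmetric] sum.reindex[OF inj]
    by (intro sum.cong refl) (simp add: e_add[symmetric] algebra_simps add_divide_distrib)
  also have "\<dots> = e (of_int (a * b0 * L) / real q) * (\<Sum>u<q. e (of_int (a * int W * L) * real u / real q))"
    by (simp add: sum_distrib_left)
  also have "(\<Sum>u<q. e (of_int (a * int W * L) * real u / real q))
      = (if int q dvd a * int W * L then of_nat q else 0)"
    by (rule sum_e_multiples[OF q])
  finally show ?thesis
    using a by (simp add: norm_mult mult.assoc coprime_dvd_mult_right_iff coprime_commute)
qed

section \<open>Cauchy--Schwarz\<close>

lemma sum_norm_square_le_sum_correlations:
  fixes h :: "'y \<Rightarrow> complex" and K :: "'x \<Rightarrow> 'y \<Rightarrow> complex"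
  assumes "\<And>y. norm (h y) \<le> 1"
  shows "(\<Sum>x\<in>X. (norm (\<Sum>y\<in>Y. h y * K x y))\<^sup>2)
    \<le> (\<Sum>y\<in>Y. \<Sum>y'\<in>Y. norm (\<Sum>x\<in>X. K x y * cnj (K x y')))"
proof -
  have "complex_of_real (\<Sum>x\<in>X. (norm (\<Sum>y\<in>Y. h y * K x y))\<^sup>2)
      = (\<Sum>x\<in>X. (\<Sum>y\<in>Y. h y * K x y) * cnj (\<Sum>y\<in>Y. h y * K x y))"
    by (simp only: of_real_sum complex_norm_square)
  also have "\<dots> = (\<Sum>x\<in>X. \<Sum>y\<in>Y. \<Sum>y'\<in>Y. (h y * cnj (h y')) * (K x y * cnj (K x y')))"
    by (simp add: cnj_sum sum_product ac_simps)
  also have "\<dots> = (\<Sum>y\<in>Y. \<Sum>x\<in>X. \<Sum>y'\<in>Y. (h y * cnj (h y')) * (K x y * cnj (K x y')))"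
    by (rule sum.swap)
  also have "\<dots> = (\<Sum>y\<in>Y. \<Sum>y'\<in>Y. \<Sum>x\<in>X. (h y * cnj (h y')) * (K x y * cnj (K x y')))"
    by (intro sum.cong refl sum.swap)
  also have "\<dots> = (\<Sum>y\<in>Y. \<Sum>y'\<in>Y. (h y * cnj (h y')) * (\<Sum>x\<in>X. K x y * cnj (K x y')))"
    by (simp add: sum_distrib_left)
  finally have expand: "complex_of_real (\<Sum>x\<in>X. (norm (\<Sum>y\<in>Y. h y * K x y))\<^sup>2)
      = (\<Sum>y\<in>Y. \<Sum>y'\<in>Y. (h y * cnj (h y')) * (\<Sum>x\<in>X. K x y * cnj (K x y')))" .
  have "(\<Sum>x\<in>X. (norm (\<Sum>y\<in>Y. h y * K x y))\<^sup>2) \<ge> 0" by (simp add: sum_nonneg)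
  then have "(\<Sum>x\<in>X. (norm (\<Sum>y\<in>Y. h y * K x y))\<^sup>2)
      = norm (complex_of_real (\<Sum>x\<in>X. (norm (\<Sum>y\<in>Y. h y * K x y))\<^sup>2))"
    by (simp only: norm_of_real abs_of_nonneg)
  also have "\<dots> = norm (\<Sum>y\<in>Y. \<Sum>y'\<in>Y. (h y * cnj (h y')) * (\<Sum>x\<in>X. K x y * cnj (K x y')))"
    by (simp only: expand)
  also have "\<dots> \<le> (\<Sum>y\<in>Y. \<Sum>y'\<in>Y. norm ((h y * cnj (h y')) * (\<Sum>x\<in>X. K x y * cnj (K x y'))))"
    by (rule order.trans[OF norm_sum sum_mono]) (rule norm_sum)
  also have "\<dots> \<le> (\<Sum>y\<in>Y. \<Sum>y'\<in>Y. norm (\<Sum>x\<in>X. K x y * cnj (K x y')))"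
    using assms by (intro sum_mono) (simp add: norm_mult mult_left_le_one_le mult_le_one)
  finally show ?thesis .
qed

lemma norm_bilinear_sum_squared_le:
  fixes g :: "'x \<Rightarrow> complex" and h :: "'y \<Rightarrow> complex" and K :: "'x \<Rightarrow> 'y \<Rightarrow> complex"
  assumes "finite X'" and "X \<subseteq> X'"
    and g: "\<And>x. norm (g x) \<le> 1" and h: "\<And>y. norm (h y) \<le> 1"
  shows "(norm (\<Sum>x\<in>X. \<Sum>y\<in>Y. g x * h y * K x y))\<^sup>2
     \<le> card X * (\<Sum>y\<in>Y. \<Sum>y'\<in>Y. norm (\<Sum>x\<in>X'. K x y * cnj (K x y')))"
proof -
  define T where "T x = (\<Sum>y\<in>Y. h y * K x y)" for x
  have "norm (\<Sum>x\<in>X. \<Sum>y\<in>Y. g x * h y * K x y) \<le> (\<Sum>x\<in>X. norm (g x * T x))"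
    unfolding T_def by (simp add: sum_distrib_left mult.assoc norm_sum)
  also have "\<dots> \<le> (\<Sum>x\<in>X. norm (T x))"
    by (intro sum_mono) (simp add: norm_mult mult_left_le_one_le g)
  finally have "(norm (\<Sum>x\<in>X. \<Sum>y\<in>Y. g x * h y * K x y))\<^sup>2 \<le> (\<Sum>x\<in>X. norm (T x))\<^sup>2"
    by (intro power_mono) auto
  also have "\<dots> \<le> card X * (\<Sum>x\<in>X. (norm (T x))\<^sup>2)"
    using sum_squared_le_sum_of_squares[of "\<lambda>x. norm (T x)" X] by (simp add: mult.commute)
  also have "\<dots> \<le> card X * (\<Sum>x\<in>X'. (norm (T x))\<^sup>2)"
    using assms(1,2) by (intro mult_left_mono sum_mono2) auto
  also have "\<dots> \<le> card X * (\<Sum>y\<in>Y. \<Sum>y'\<in>Y. norm (\<Sum>x\<in>X'. K x y * cnj (K x y')))"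
    unfolding T_def by (intro mult_left_mono sum_norm_square_le_sum_correlations h) simp
  finally show ?thesis .
qed

section \<open>Splitting the quadratic form\<close>

definition merge :: "'i set \<Rightarrow> ('i \<Rightarrow> 'a) \<Rightarrow> ('i \<Rightarrow> 'a) \<Rightarrow> 'i \<Rightarrow> 'a" where
  "merge S x y = (\<lambda>i. if i \<in> S then x i else y i)"

lemma sum_PiE_Un_disjoint:
  fixes \<phi> :: "('i \<Rightarrow> 'a) \<Rightarrow> 'b::comm_monoid_add"
  assumes "S \<inter> T = {}"
  shows "(\<Sum>c\<in>PiE (S \<union> T) F. \<phi> c) = (\<Sum>x\<in>PiE S F. \<Sum>y\<in>PiE T F. \<phi> (merge S x y))"
proof -
  have "merge S (restrict c S) (restrict c T) = c" if "c \<in> PiE (S \<union> T) F" for c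
    using that by (auto simp: merge_def PiE_iff extensional_def fun_eq_iff)
  then have "(\<Sum>c\<in>PiE (S \<union> T) F. \<phi> c) = (\<Sum>(x, y)\<in>PiE S F \<times> PiE T F. \<phi> (merge S x y))"
    using assms
    by (intro sum.reindex_bij_witness[of _ "\<lambda>(x, y). merge S x y" "\<lambda>c. (restrict c S, restrict c T)"])
       (auto simp: merge_def PiE_iff extensional_def restrict_def fun_eq_iff)
  then show ?thesis by (simp add: sum.cartesian_product)
qed

definition part_off_B :: "nat \<Rightarrow> (nat \<Rightarrow> nat \<Rightarrow> real) \<Rightarrow> nat set \<Rightarrow> (nat \<Rightarrow> int) \<Rightarrow> real" where
  "part_off_B s M B c =
     (\<Sum>i<s. \<Sum>j<s. if i \<notin> B \<and> j \<notin> B then M i j * of_int (c i) * of_int (c j) else 0)"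

definition part_off_A :: "nat \<Rightarrow> (nat \<Rightarrow> nat \<Rightarrow> real) \<Rightarrow> nat set \<Rightarrow> nat set \<Rightarrow> (nat \<Rightarrow> int) \<Rightarrow> real" where
  "part_off_A s M A B c =
     (\<Sum>i<s. \<Sum>j<s. if (i \<in> B \<or> j \<in> B) \<and> i \<notin> A \<and> j \<notin> A then M i j * of_int (c i) * of_int (c j) else 0)"

definition cross_form :: "(nat \<Rightarrow> nat \<Rightarrow> real) \<Rightarrow> nat set \<Rightarrow> nat set \<Rightarrow> (nat \<Rightarrow> int) \<Rightarrow> (nat \<Rightarrow> int) \<Rightarrow> real" where
  "cross_form M A B x y = (\<Sum>i\<in>A. \<Sum>j\<in>B. 2 * M i j * of_int (x i) * of_int (y j))"

lemma sum_lessThan_block: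
  fixes s :: nat
  assumes "A \<subseteq> {..<s}" and "B \<subseteq> {..<s}"
  shows "(\<Sum>i<s. \<Sum>j<s. if i \<in> A \<and> j \<in> B then f i j else 0) = (\<Sum>i\<in>A. \<Sum>j\<in>B. f i j)"
proof -
  have "(\<Sum>j<s. if i \<in> A \<and> j \<in> B then f i j else 0) = (if i \<in> A then \<Sum>j\<in>B. f i j else 0)" for i
    using assms(2) by (simp add: sum.inter_restrict[symmetric] Int_absorb1)
  then show ?thesis using assms(1) by (simp add: sum.inter_restrict[symmetric] Int_absorb1)
qed

lemma qform_split:
  assumes symm: "\<And>i j. i < s \<Longrightarrow> j < s \<Longrightarrow> M i j = M j i"
    and A: "A \<subseteq> {..<s}" and B: "B \<subseteq> {..<s}" and AB: "A \<inter> B = {}"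
  shows "qform s M c = part_off_B s M B c + part_off_A s M A B c + cross_form M A B c c"
proof -
  define t where "t i j = M i j * of_int (c i) * of_int (c j)" for i j
  let ?block = "\<lambda>A B. \<Sum>i<s. \<Sum>j<s. if i \<in> A \<and> j \<in> B then t i j else 0"
  have split: "t i j = (if i \<notin> B \<and> j \<notin> B then t i j else 0)
      + (if (i \<in> B \<or> j \<in> B) \<and> i \<notin> A \<and> j \<notin> A then t i j else 0)
      + ((if i \<in> A \<and> j \<in> B then t i j else 0) + (if i \<in> B \<and> j \<in> A then t i j else 0))" for i j
    using AB by auto
  have "qform s M c = (\<Sum>i<s. \<Sum>j<s. t i j)" unfolding qform_def t_def ..
  also have "\<dots> = part_off_B s M B c + part_off_A s M A B c + (?block A B + ?block B A)"
    unfolding part_off_B_def part_off_A_def t_def[symmetric] by (subst split) (simp only: sum.distrib)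
  also have "?block B A = ?block A B"
    by (subst sum.swap) (intro sum.cong refl, auto simp: t_def symm)
  also have "?block A B = (\<Sum>i\<in>A. \<Sum>j\<in>B. t i j)"
    by (rule sum_lessThan_block[OF A B])
  finally show ?thesis
    unfolding cross_form_def t_def by (simp add: sum.distrib[symmetric] sum_distrib_left ac_simps)
qed

lemma qform_merge:
  assumes symm: "\<And>i j. i < s \<Longrightarrow> j < s \<Longrightarrow> M i j = M j i"
    and A: "A \<subseteq> {..<s}" and B: "B \<subseteq> {..<s}" and AB: "A \<inter> B = {}"
    and Z: "Z = {..<s} - (A \<union> B)"
  shows "qform s M (merge Z z (merge A x y))
    = part_off_B s M B (merge Z z (merge A x (\<lambda>_. 0)))
      + part_off_A s M A B (merge Z z (merge A (\<lambda>_. 0) y)) + cross_form M A B x y"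
proof -
  define c where "c = merge Z z (merge A x y)"
  have "part_off_B s M B c = part_off_B s M B (merge Z z (merge A x (\<lambda>_. 0)))"
    unfolding part_off_B_def by (intro sum.cong refl) (auto simp: c_def merge_def Z)
  moreover have "part_off_A s M A B c = part_off_A s M A B (merge Z z (merge A (\<lambda>_. 0) y))"
    unfolding part_off_A_def by (intro sum.cong refl) (auto simp: c_def merge_def Z)
  moreover have "cross_form M A B c c = cross_form M A B x y"
    unfolding cross_form_def using AB by (intro sum.cong refl) (auto simp: c_def merge_def Z)
  ultimately show ?thesis
    by (simp add: c_def qform_split[OF symm A B AB])
qed

lemma cross_form_diff:
  assumes "\<And>i j. i \<in> A \<Longrightarrow> j \<in> B \<Longrightarrow> 2 * M i j = of_int (G i j)"
  shows "cross_form M A B x y - cross_form M A B x y'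
    = of_int (\<Sum>i\<in>A. x i * (\<Sum>j\<in>B. G i j * (y j - y' j)))"
proof -
  have "cross_form M A B x z = (\<Sum>i\<in>A. \<Sum>j\<in>B. of_int (x i * (G i j * z j)))" for z
    unfolding cross_form_def by (intro sum.cong refl) (simp add: assms[symmetric])
  then show ?thesis
    by (simp add: sum_subtractf[symmetric] sum_distrib_left right_diff_distrib)
qed

lemma prod_if_const:
  fixes c :: "'a::comm_semiring_1"
  assumes "finite A"
  shows "(\<Prod>i\<in>A. if P i then c else 0) = (if \<forall>i\<in>A. P i then c ^ card A else 0)"
  using assms by (induction A rule: finite_induct) auto

lemma norm_cross_correlation_eq:
  fixes a :: int and y y' :: "nat \<Rightarrow> int"
  assumes G: "\<And>i j. i \<in> A \<Longrightarrow> j \<in> B \<Longrightarrow> 2 * M i j = of_int (G i j)"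
    and A: "finite A" and q: "q > 0" and W: "W > 0" and a: "coprime a (int q)"
  shows "norm (\<Sum>x\<in>PiE A (\<lambda>_. residue_class q W b).
      e (of_int a * cross_form M A B x y / q) * cnj (e (of_int a * cross_form M A B x y' / q)))
    = (if \<forall>i\<in>A. int q dvd int W * (\<Sum>j\<in>B. G i j * (y j - y' j)) then real q ^ card A else 0)"
proof -
  define L where "L i = (\<Sum>j\<in>B. G i j * (y j - y' j))" for i
  have "of_int a * cross_form M A B x y / q - of_int a * cross_form M A B x y' / q
      = (\<Sum>i\<in>A. of_int (a * x i * L i) / q)" for x
  proof -
    have "of_int a * cross_form M A B x y / q - of_int a * cross_form M A B x y' / q
        = of_int a * (cross_form M A B x y - cross_form M A B x y') / q"
      by (simp add: algebra_simps diff_divide_distrib)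
    also have "\<dots> = of_int a * of_int (\<Sum>i\<in>A. x i * L i) / q"
      unfolding L_def by (simp only: cross_form_diff[OF G])
    finally show ?thesis by (simp add: sum_distrib_left sum_divide_distrib mult.assoc)
  qed
  then have "e (of_int a * cross_form M A B x y / q) * cnj (e (of_int a * cross_form M A B x y' / q))
      = (\<Prod>i\<in>A. e (of_int (a * x i * L i) / q))" for x
    by (simp add: e_diff[symmetric] e_sum[OF A])
  then have "norm (\<Sum>x\<in>PiE A (\<lambda>_. residue_class q W b).
      e (of_int a * cross_form M A B x y / q) * cnj (e (of_int a * cross_form M A B x y' / q)))
      = norm (\<Prod>i\<in>A. \<Sum>t\<in>residue_class q W b. e (of_int (a * t * L i) / q))"
    by (simp add: prod_sum_PiE[OF A])
  also have "\<dots> = (\<Prod>i\<in>A. if int q dvd int W * L i then real q else 0)"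
    by (simp only: prod_norm[symmetric] norm_sum_residue_class_e[OF q W a])
  finally show ?thesis by (simp add: prod_if_const[OF A] L_def)
qed

lemma card_dvd_mult_diff_le:
  fixes K v :: int
  assumes q: "q > 0" and K: "K \<noteq> 0"
  shows "card {t \<in> {1..int (q * W)}. int q dvd K * (v - t)} \<le> nat \<bar>K\<bar> * W"
proof -
  let ?T = "{t \<in> {1..int (q * W)}. int q dvd K * (v - t)}"
  \<comment> \<open>The values |K| (t - 1) for t in ?T are pairwise congruent modulo q, so their quotients
      by q are distinct.\<close>
  define \<psi> where "\<psi> t = (\<bar>K\<bar> * (t - 1)) div int q" for t
  have "inj_on \<psi> ?T"
  proof (rule inj_onI)
    fix t1 t2 assume t: "t1 \<in> ?T" "t2 \<in> ?T" "\<psi> t1 = \<psi> t2"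
    have "int q dvd K * (v - t2) - K * (v - t1)" using t(1,2) by (simp add: dvd_diff)
    then have "int q dvd \<bar>K\<bar> * (t1 - 1) - \<bar>K\<bar> * (t2 - 1)"
      by (cases "K \<ge> 0") (auto simp: algebra_simps dvd_diff_commute)
    then have "\<bar>K\<bar> * (t1 - 1) mod int q = \<bar>K\<bar> * (t2 - 1) mod int q" by (simp add: mod_eq_dvd_iff)
    with t(3) have "\<bar>K\<bar> * (t1 - 1) = \<bar>K\<bar> * (t2 - 1)" unfolding \<psi>_def by (metis div_mult_mod_eq)
    then show "t1 = t2" using K by simp
  qed
  moreover have "\<psi> ` ?T \<subseteq> {0..<\<bar>K\<bar> * int W}"
  proof
    fix u assume "u \<in> \<psi> ` ?T"
    then obtain t where t: "1 \<le> t" "t \<le> int q * int W" and u: "u = \<psi> t" by auto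
    have "\<bar>K\<bar> * t \<le> \<bar>K\<bar> * (int q * int W)" using t by (intro mult_left_mono) auto
    moreover have "\<bar>K\<bar> * (t - 1) = \<bar>K\<bar> * t - \<bar>K\<bar>" by (simp add: right_diff_distrib)
    moreover have "\<bar>K\<bar> > 0" using K by simp
    ultimately have "\<bar>K\<bar> * (t - 1) < \<bar>K\<bar> * (int q * int W)" by linarith
    then have "\<bar>K\<bar> * (t - 1) < int q * (\<bar>K\<bar> * int W)" by (simp add: ac_simps)
    then have "\<psi> t < \<bar>K\<bar> * int W" unfolding \<psi>_def using q
      by (smt (verit) minus_mod_eq_mult_div mult_left_less_imp_less pos_mod_sign of_nat_0_less_iff)
    moreover have "0 \<le> \<psi> t" unfolding \<psi>_def using t q by (simp add: pos_imp_zdiv_nonneg_iff)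
    ultimately show "u \<in> {0..<\<bar>K\<bar> * int W}" using u by simp
  qed
  ultimately have "card ?T \<le> card {0..<\<bar>K\<bar> * int W}" by (intro card_inj_on_le[of \<psi>]) auto
  then show ?thesis by (simp add: nat_mult_distrib)
qed

definition inj_mod_up_to :: "nat set \<Rightarrow> nat set \<Rightarrow> (nat \<Rightarrow> nat \<Rightarrow> int) \<Rightarrow> int \<Rightarrow> bool" where
  "inj_mod_up_to A B G D \<longleftrightarrow> D \<noteq> 0 \<and>
     (\<forall>d N. (\<forall>i\<in>A. N dvd (\<Sum>j\<in>B. G i j * d j)) \<longrightarrow> (\<forall>j\<in>B. N dvd D * d j))"

lemma inj_mod_up_toD:
  "inj_mod_up_to A B G D \<Longrightarrow> \<forall>i\<in>A. N dvd (\<Sum>j\<in>B. G i j * d j) \<Longrightarrow> j \<in> B \<Longrightarrow> N dvd D * d j"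
  unfolding inj_mod_up_to_def by blast

lemma card_correlated_le:
  fixes y :: "nat \<Rightarrow> int"
  assumes B: "finite B" and q: "q > 0" and W: "W > 0" and D: "inj_mod_up_to A B G D"
  shows "card {y' \<in> PiE B (\<lambda>_. admissible q W b).
            \<forall>i\<in>A. int q dvd int W * (\<Sum>j\<in>B. G i j * (y j - y' j))}
    \<le> (nat \<bar>D\<bar> * W\<^sup>2) ^ card B"
proof -
  define T where "T v = {t \<in> {1..int (q * W)}. int q dvd (D * int W) * (v - t)}" for v
  have "{y' \<in> PiE B (\<lambda>_. admissible q W b). \<forall>i\<in>A. int q dvd int W * (\<Sum>j\<in>B. G i j * (y j - y' j))}
      \<subseteq> PiE B (\<lambda>j. T (y j))"
  proof
    fix y' assume y': "y' \<in> {y' \<in> PiE B (\<lambda>_. admissible q W b).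
      \<forall>i\<in>A. int q dvd int W * (\<Sum>j\<in>B. G i j * (y j - y' j))}"
    moreover have "int W * (\<Sum>j\<in>B. G i j * (y j - y' j)) = (\<Sum>j\<in>B. G i j * (int W * (y j - y' j)))"
      for i by (simp add: sum_distrib_left mult.left_commute)
    ultimately have "int q dvd D * (int W * (y j - y' j))" if "j \<in> B" for j
      using inj_mod_up_toD[OF D _ that, of "int q" "\<lambda>j. int W * (y j - y' j)"] by simp
    then have "int q dvd (D * int W) * (y j - y' j)" if "j \<in> B" for j
      using that by (simp add: mult.assoc)
    then show "y' \<in> PiE B (\<lambda>j. T (y j))"
      using y' unfolding T_def admissible_def by (auto simp: PiE_iff)
  qed
  then have "card {y' \<in> PiE B (\<lambda>_. admissible q W b).
      \<forall>i\<in>A. int q dvd int W * (\<Sum>j\<in>B. G i j * (y j - y' j))} \<le> card (PiE B (\<lambda>j. T (y j)))"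
    by (intro card_mono finite_PiE B) (auto simp: T_def intro: finite_subset[of _ "{1..int (q * W)}"])
  also have "\<dots> = (\<Prod>j\<in>B. card (T (y j)))" by (rule card_PiE[OF B])
  also have "\<dots> \<le> (\<Prod>j\<in>B. nat \<bar>D\<bar> * W\<^sup>2)"
    using D W unfolding T_def inj_mod_up_to_def
    by (intro prod_mono conjI order.trans[OF card_dvd_mult_diff_le[OF q]])
       (auto simp: abs_mult nat_mult_distrib power2_eq_square)
  finally show ?thesis by simp
qed

lemma sum_norm_cross_correlations_le:
  fixes a :: int
  assumes G: "\<And>i j. i \<in> A \<Longrightarrow> j \<in> B \<Longrightarrow> 2 * M i j = of_int (G i j)"
    and A: "finite A" and B: "finite B" and q: "q > 0" and W: "W > 0" and a: "coprime a (int q)"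
    and D: "inj_mod_up_to A B G D"
  shows "(\<Sum>y\<in>PiE B (\<lambda>_. admissible q W b). \<Sum>y'\<in>PiE B (\<lambda>_. admissible q W b).
           norm (\<Sum>x\<in>PiE A (\<lambda>_. residue_class q W b).
             e (of_int a * cross_form M A B x y / q) * cnj (e (of_int a * cross_form M A B x y' / q))))
    \<le> real (card (admissible q W b)) ^ card B * real q ^ card A * (real_of_int \<bar>D\<bar> * real W ^ 2) ^ card B"
proof -
  define Y where "Y = PiE B (\<lambda>_. admissible q W b)"
  define close where "close y = {y' \<in> Y. \<forall>i\<in>A. int q dvd int W * (\<Sum>j\<in>B. G i j * (y j - y' j))}"
    for y :: "nat \<Rightarrow> int"
  have "finite Y" unfolding Y_def using B by (simp add: finite_PiE)
  have "(\<Sum>y\<in>Y. \<Sum>y'\<in>Y. norm (\<Sum>x\<in>PiE A (\<lambda>_. residue_class q W b).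
          e (of_int a * cross_form M A B x y / q) * cnj (e (of_int a * cross_form M A B x y' / q))))
      = (\<Sum>y\<in>Y. \<Sum>y'\<in>close y. real q ^ card A)"
    unfolding close_def sum.inter_filter[OF \<open>finite Y\<close>]
    by (intro sum.cong refl) (rule norm_cross_correlation_eq[OF G A q W a])
  also have "\<dots> \<le> (\<Sum>y\<in>Y. real q ^ card A * (real_of_int \<bar>D\<bar> * real W ^ 2) ^ card B)"
  proof (intro sum_mono)
    fix y
    have "card (close y) \<le> (nat \<bar>D\<bar> * W\<^sup>2) ^ card B"
      unfolding close_def Y_def by (rule card_correlated_le[OF B q W D])
    then have "real (card (close y)) \<le> real ((nat \<bar>D\<bar> * W\<^sup>2) ^ card B)"
      by (simp only: of_nat_le_iff)
    also have "\<dots> = (real_of_int \<bar>D\<bar> * real W ^ 2) ^ card B" by simp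
    finally have "real q ^ card A * real (card (close y))
        \<le> real q ^ card A * (real_of_int \<bar>D\<bar> * real W ^ 2) ^ card B"
      by (simp add: mult_left_mono)
    then show "(\<Sum>y'\<in>close y. real q ^ card A) \<le> real q ^ card A * (real_of_int \<bar>D\<bar> * real W ^ 2) ^ card B"
      by (simp add: mult.commute)
  qed
  also have "\<dots> = real (card (admissible q W b)) ^ card B * real q ^ card A * (real_of_int \<bar>D\<bar> * real W ^ 2) ^ card B"
    using B by (simp add: Y_def card_PiE)
  finally show ?thesis unfolding Y_def .
qed

lemma norm_bilinear_cross_sum_le:
  fixes a :: int and g :: "(nat \<Rightarrow> int) \<Rightarrow> complex" and h :: "(nat \<Rightarrow> int) \<Rightarrow> complex"
  assumes G: "\<And>i j. i \<in> A \<Longrightarrow> j \<in> B \<Longrightarrow> 2 * M i j = of_int (G i j)"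
    and A: "finite A" and B: "finite B" and q: "q > 0" and W: "W > 0" and a: "coprime a (int q)"
    and D: "inj_mod_up_to A B G D"
    and g: "\<And>x. norm (g x) \<le> 1" and h: "\<And>y. norm (h y) \<le> 1"
  shows "norm (\<Sum>x\<in>PiE A (\<lambda>_. admissible q W b). \<Sum>y\<in>PiE B (\<lambda>_. admissible q W b).
           g x * h y * e (of_int a * cross_form M A B x y / q))
    \<le> sqrt (real (card (admissible q W b)) ^ (card A + card B) * real q ^ card A
             * (real_of_int \<bar>D\<bar> * real W ^ 2) ^ card B)"
proof -
  \<comment> \<open>After Cauchy--Schwarz, the x-sum may be extended to the full residue class, where it factors
      into complete geometric sums.\<close>
  have "PiE A (\<lambda>_. admissible q W b) \<subseteq> PiE A (\<lambda>_. residue_class q W b)"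
    using admissible_subset_residue_class[OF W] by (auto simp: PiE_iff)
  then have "(norm (\<Sum>x\<in>PiE A (\<lambda>_. admissible q W b). \<Sum>y\<in>PiE B (\<lambda>_. admissible q W b).
           g x * h y * e (of_int a * cross_form M A B x y / q)))\<^sup>2
      \<le> card (PiE A (\<lambda>_. admissible q W b)) *
        (\<Sum>y\<in>PiE B (\<lambda>_. admissible q W b). \<Sum>y'\<in>PiE B (\<lambda>_. admissible q W b).
           norm (\<Sum>x\<in>PiE A (\<lambda>_. residue_class q W b).
             e (of_int a * cross_form M A B x y / q) * cnj (e (of_int a * cross_form M A B x y' / q))))"
    using A by (intro norm_bilinear_sum_squared_le g h) (auto intro: finite_PiE)
  also have "\<dots> \<le> real (card (admissible q W b)) ^ card A *
      (real (card (admissible q W b)) ^ card B * real q ^ card A * (real_of_int \<bar>D\<bar> * real W ^ 2) ^ card B)"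
    unfolding card_PiE[OF A] prod_constant of_nat_power
    by (intro mult_left_mono sum_norm_cross_correlations_le[OF G A B q W a D] zero_le_power of_nat_0_le_iff)
  finally show ?thesis by (intro real_le_rsqrt) (simp add: power_add ac_simps)
qed

lemma norm_S_star_le:
  fixes a :: int
  assumes symm: "\<And>i j. i < s \<Longrightarrow> j < s \<Longrightarrow> M i j = M j i"
    and A: "A \<subseteq> {..<s}" and B: "B \<subseteq> {..<s}" and AB: "A \<inter> B = {}"
    and G: "\<And>i j. i \<in> A \<Longrightarrow> j \<in> B \<Longrightarrow> 2 * M i j = of_int (G i j)"
    and D: "inj_mod_up_to A B G D"
    and q: "q > 0" and W: "W > 0" and a: "coprime a (int q)"
  shows "norm (S_star s M W b q a)
    \<le> real (card (admissible q W b)) ^ (s - card A - card B) *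
       sqrt (real (card (admissible q W b)) ^ (card A + card B) * real q ^ card A
             * (real_of_int \<bar>D\<bar> * real W ^ 2) ^ card B)"
proof -
  define X where "X = admissible q W b"
  define Z where "Z = {..<s} - (A \<union> B)"
  define bound where "bound = sqrt (real (card X) ^ (card A + card B) * real q ^ card A
      * (real_of_int \<bar>D\<bar> * real W ^ 2) ^ card B)"
  have fin: "finite A" "finite B" using A B finite_subset by auto
  have U: "{..<s} = Z \<union> (A \<union> B)" and ZAB: "Z \<inter> (A \<union> B) = {}" unfolding Z_def using A B by auto
  define g where "g z x = e (of_int a * part_off_B s M B (merge Z z (merge A x (\<lambda>_. 0))) / q)" for z x
  define h where "h z y = e (of_int a * part_off_A s M A B (merge Z z (merge A (\<lambda>_. 0) y)) / q)" for z y
  have "S_star s M W b q a = (\<Sum>c\<in>PiE {..<s} (\<lambda>_. X). e (of_int a * qform s M c / q))"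
    unfolding S_star_def X_def admissible_def ..
  also have "\<dots> = (\<Sum>z\<in>PiE Z (\<lambda>_. X). \<Sum>x\<in>PiE A (\<lambda>_. X). \<Sum>y\<in>PiE B (\<lambda>_. X).
      g z x * h z y * e (of_int a * cross_form M A B x y / q))"
    unfolding U sum_PiE_Un_disjoint[OF ZAB] sum_PiE_Un_disjoint[OF AB]
    by (simp add: qform_merge[OF symm A B AB Z_def] g_def h_def e_add[symmetric] distrib_left add_divide_distrib)
  finally have "norm (S_star s M W b q a) \<le> (\<Sum>z\<in>PiE Z (\<lambda>_. X). norm (\<Sum>x\<in>PiE A (\<lambda>_. X).
      \<Sum>y\<in>PiE B (\<lambda>_. X). g z x * h z y * e (of_int a * cross_form M A B x y / q)))"
    by (simp only: norm_sum)
  also have "\<dots> \<le> (\<Sum>z\<in>PiE Z (\<lambda>_. X). bound)"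
    unfolding X_def bound_def
    by (intro sum_mono norm_bilinear_cross_sum_le[OF G fin q W a D]) (simp_all add: g_def h_def)
  also have "\<dots> = real (card X) ^ card Z * bound"
    by (simp add: card_PiE Z_def)
  also have "card Z = s - card A - card B"
    using AB fin unfolding Z_def by (simp add: card_Diff_subset card_Un_disjoint A B)
  finally show ?thesis unfolding X_def bound_def .
qed

section \<open>Blocks of full rank\<close>

lemma (in vec_space) rank_ge_obtains_indep_cols:
  assumes B0: "B0 \<in> carrier_mat n nc" and rk: "rank B0 \<ge> k"
  obtains ls where "inj_on ls {..<k}" and "ls ` {..<k} \<subseteq> {..<nc}"
    and "\<And>v. v \<in> carrier_vec k \<Longrightarrow> \<forall>i<n. (\<Sum>m<k. B0 $$ (i, ls m) * v $ m) = 0 \<Longrightarrow> v = 0\<^sub>v k"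
proof -
  obtain S where max: "maximal S (\<lambda>T. T \<subseteq> set (cols B0) \<and> lin_indpt T)"
    using maximal_exists[of "(\<lambda>T. T \<subseteq> set (cols B0) \<and> lin_indpt T)" "card (set (cols B0))" "{}"]
    by (meson List.finite_set card_mono empty_iff empty_subsetI finite_lin_indpt2 rev_finite_subset)
  have S: "S \<subseteq> set (cols B0)" "lin_indpt S" using max unfolding maximal_def by auto
  obtain U where U: "U \<subseteq> S" "card U = k" "finite U"
    using obtain_subset_with_card_n[of k S] rk rank_card_indpt[OF B0 max] by auto
  obtain u where u: "bij_betw u {0..<k} U" using ex_bij_betw_nat_finite[OF U(3)] U(2) by auto
  have "\<exists>l. l < nc \<and> u m = col B0 l" if "m < k" for m
  proof -
    have "u m \<in> U" using u that by (auto simp: bij_betw_def)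
    then have "u m \<in> set (cols B0)" using U(1) S(1) by blast
    then show ?thesis using B0 by (auto simp: in_set_conv_nth)
  qed
  then obtain ls where ls: "\<And>m. m < k \<Longrightarrow> ls m < nc \<and> u m = col B0 (ls m)" by metis
  have "inj_on ls {..<k}"
    using u ls by (auto simp: inj_on_def bij_betw_def)
  moreover have "ls ` {..<k} \<subseteq> {..<nc}" using ls by auto
  moreover have "v = 0\<^sub>v k"
    if v: "v \<in> carrier_vec k" "\<forall>i<n. (\<Sum>m<k. B0 $$ (i, ls m) * v $ m) = 0" for v
  proof (rule ccontr)
    define C where "C = mat n k (\<lambda>(i, m). B0 $$ (i, ls m))"
    have C: "C \<in> carrier_mat n k" unfolding C_def by simp
    have "C *\<^sub>v v = 0\<^sub>v n"
      using v unfolding C_def by (intro eq_vecI) (simp_all add: scalar_prod_def atLeast0LessThan row_def)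
    have "col C m = u m" if "m < k" for m
      using ls[OF that] B0 that unfolding C_def by (auto simp: col_def)
    then have colsC: "cols C = map u [0..<k]" using C by (intro nth_equalityI) auto
    assume "v \<noteq> 0\<^sub>v k"
    from lin_depI[OF C v(1) this \<open>C *\<^sub>v v = 0\<^sub>v n\<close>] have "lin_dep (set (cols C))"
      unfolding colsC using u by (simp add: distinct_map bij_betw_def atLeast0LessThan)
    then show False
      using subset_li_is_li[OF S(2) U(1)] u unfolding colsC by (simp add: bij_betw_def atLeast0LessThan)
  qed
  ultimately show ?thesis using that by blast
qed

lemma det_gram_int_nonzero:
  fixes F :: "nat \<Rightarrow> nat \<Rightarrow> int"
  assumes inj: "\<And>v. v \<in> carrier_vec k \<Longrightarrow> (\<forall>i<r. (\<Sum>m<k. of_int (F i m) * v $ m :: real) = 0) \<Longrightarrow> v = 0\<^sub>v k"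
  shows "det (mat k k (\<lambda>(m, m'). \<Sum>i<r. F i m * F i m')) \<noteq> 0"
proof
  define \<Gamma> :: "real mat" where "\<Gamma> = mat k k (\<lambda>(m, m'). \<Sum>i<r. of_int (F i m) * of_int (F i m'))"
  have \<Gamma>: "\<Gamma> \<in> carrier_mat k k" unfolding \<Gamma>_def by simp
  assume "det (mat k k (\<lambda>(m, m'). \<Sum>i<r. F i m * F i m')) = 0"
  moreover have "\<Gamma> = map_mat real_of_int (mat k k (\<lambda>(m, m'). \<Sum>i<r. F i m * F i m'))"
    unfolding \<Gamma>_def by (rule eq_matI) auto
  then have "det \<Gamma> = real_of_int (det (mat k k (\<lambda>(m, m'). \<Sum>i<r. F i m * F i m')))"
    by (simp only: of_int_hom.hom_det)
  ultimately have "det \<Gamma> = 0" by simp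
  then obtain v where v: "v \<in> carrier_vec k" "v \<noteq> 0\<^sub>v k" "\<Gamma> *\<^sub>v v = 0\<^sub>v k"
    using det_0_iff_vec_prod_zero_field[OF \<Gamma>] by auto
  define w where "w i = (\<Sum>m<k. of_int (F i m) * v $ m :: real)" for i
  \<comment> \<open>v \<bullet> \<Gamma> v = |F v|^2, so \<Gamma> v = 0 forces F v = 0.\<close>
  have "(\<Sum>i<r. (w i)\<^sup>2) = (\<Sum>m0<k. v $ m0 * (\<Sum>m<k. \<Gamma> $$ (m0, m) * v $ m))"
    unfolding w_def power2_eq_square \<Gamma>_def
    by (simp add: sum_product sum_distrib_left sum_distrib_right ac_simps sum.swap[of _ "{..<r}"])
  also have "\<dots> = (\<Sum>m0<k. v $ m0 * (\<Gamma> *\<^sub>v v) $ m0)"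
    using \<Gamma> v(1) by (intro sum.cong refl) (simp add: scalar_prod_def atLeast0LessThan row_def)
  also have "\<dots> = 0" using v(3) by simp
  finally have "\<forall>i<r. w i = 0" by (simp add: sum_nonneg_eq_0_iff)
  then show False using inj v(1,2) unfolding w_def by blast
qed

lemma int_mat_left_inverse_scaled:
  fixes F :: "nat \<Rightarrow> nat \<Rightarrow> int"
  assumes inj: "\<And>v. v \<in> carrier_vec k \<Longrightarrow> (\<forall>i<r. (\<Sum>m<k. of_int (F i m) * v $ m :: real) = 0) \<Longrightarrow> v = 0\<^sub>v k"
  shows "\<exists>D E. D \<noteq> 0 \<and> (\<forall>m0<k. \<forall>\<delta>. (\<Sum>i<r. E m0 i * (\<Sum>m<k. F i m * \<delta> m)) = D * \<delta> m0)"
proof -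
  \<comment> \<open>E = adj (F^T F) F^T, so that E F = det (F^T F) times the identity.\<close>
  define \<Gamma> :: "int mat" where "\<Gamma> = mat k k (\<lambda>(m, m'). \<Sum>i<r. F i m * F i m')"
  have \<Gamma>: "\<Gamma> \<in> carrier_mat k k" unfolding \<Gamma>_def by simp
  define Adj where "Adj = adj_mat \<Gamma>"
  have Adj: "Adj \<in> carrier_mat k k" "Adj * \<Gamma> = det \<Gamma> \<cdot>\<^sub>m 1\<^sub>m k"
    unfolding Adj_def using adj_mat[OF \<Gamma>] by auto
  define E where "E m0 i = (\<Sum>m'<k. Adj $$ (m0, m') * F i m')" for m0 i
  have AG: "(\<Sum>m'<k. Adj $$ (m0, m') * \<Gamma> $$ (m', m)) = (if m0 = m then det \<Gamma> else 0)"
    if "m0 < k" "m < k" for m0 m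
  proof -
    have "(Adj * \<Gamma>) $$ (m0, m) = (\<Sum>m'<k. Adj $$ (m0, m') * \<Gamma> $$ (m', m))"
      using Adj(1) \<Gamma> that by (simp add: scalar_prod_def atLeast0LessThan)
    moreover have "(Adj * \<Gamma>) $$ (m0, m) = det \<Gamma> * (if m0 = m then 1 else 0)" using Adj(2) that by simp
    ultimately show ?thesis by (cases "m0 = m") simp_all
  qed
  have "(\<Sum>i<r. E m0 i * (\<Sum>m<k. F i m * \<delta> m)) = det \<Gamma> * \<delta> m0" if m0: "m0 < k" for m0 \<delta>
  proof -
    have "(\<Sum>i<r. E m0 i * (\<Sum>m<k. F i m * \<delta> m))
        = (\<Sum>m'<k. \<Sum>m<k. \<Sum>i<r. Adj $$ (m0, m') * (F i m' * F i m) * \<delta> m)"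
      unfolding E_def by (simp add: sum_product mult.assoc sum.swap[of _ "{..<r}"])
    also have "\<dots> = (\<Sum>m'<k. \<Sum>m<k. Adj $$ (m0, m') * \<Gamma> $$ (m', m) * \<delta> m)"
      unfolding \<Gamma>_def by (intro sum.cong refl) (simp add: sum_distrib_left sum_distrib_right)
    also have "\<dots> = (\<Sum>m<k. (\<Sum>m'<k. Adj $$ (m0, m') * \<Gamma> $$ (m', m)) * \<delta> m)"
      by (subst sum.swap) (simp add: sum_distrib_right)
    also have "\<dots> = (\<Sum>m<k. if m = m0 then det \<Gamma> * \<delta> m else 0)"
      using AG[OF m0] by (intro sum.cong refl) auto
    also have "\<dots> = det \<Gamma> * \<delta> m0" using m0 by (simp add: sum.delta)
    finally show ?thesis .
  qed
  moreover have "det \<Gamma> \<noteq> 0" unfolding \<Gamma>_def by (rule det_gram_int_nonzero[OF inj])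
  ultimately show ?thesis by (intro exI[of _ "det \<Gamma>"] exI[of _ E]) auto
qed

lemma rank_off_attained:
  fixes s :: nat and M :: "nat \<Rightarrow> nat \<Rightarrow> real"
  obtains r I J where "inj_on I {..<r}" and "inj_on J {..<r}"
    and "I ` {..<r} \<subseteq> {..<s}" and "J ` {..<r} \<subseteq> {..<s}" and "I ` {..<r} \<inter> J ` {..<r} = {}"
    and "rank_off s M = vec_space.rank r (mat r r (\<lambda>(k, l). M (I k) (J l)))"
proof -
  define R where "R = {vec_space.rank r (mat r r (\<lambda>(k, l). M (I k) (J l)) :: real mat) | r I J.
      inj_on I {..<r} \<and> inj_on J {..<r} \<and> I ` {..<r} \<subseteq> {..<s} \<and> J ` {..<r} \<subseteq> {..<s}
      \<and> I ` {..<r} \<inter> J ` {..<r} = {}}"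
  have "R \<subseteq> {..s}"
  proof
    fix x assume "x \<in> R"
    then obtain r I J where x: "x = vec_space.rank r (mat r r (\<lambda>(k, l). M (I k) (J l)) :: real mat)"
      and I: "inj_on I {..<r}" "I ` {..<r} \<subseteq> {..<s}" unfolding R_def by blast
    have "x \<le> r" unfolding x by (rule vec_space.rank_le_nc) simp
    moreover have "r \<le> s" using card_mono[OF _ I(2)] card_image[OF I(1)] by simp
    ultimately show "x \<in> {..s}" by simp
  qed
  then have "finite R" by (rule finite_subset) simp
  moreover have "R \<noteq> {}" unfolding R_def by (auto intro!: exI[of _ 0])
  ultimately have "rank_off s M \<in> R" unfolding rank_off_def R_def[symmetric] by (rule Max_in)
  then show ?thesis using that unfolding R_def by blast
qed

lemma inj_mod_up_to_of_left_inverse: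
  fixes G :: "nat \<Rightarrow> nat \<Rightarrow> int"
  assumes "A = \<alpha> ` {..<r}" and "B = \<beta> ` {..<k}" and "inj_on \<beta> {..<k}" and "D \<noteq> 0"
    and inv: "\<forall>m0<k. \<forall>\<delta>. (\<Sum>i<r. E m0 i * (\<Sum>m<k. G (\<alpha> i) (\<beta> m) * \<delta> m)) = D * \<delta> m0"
  shows "inj_mod_up_to A B G D"
  unfolding inj_mod_up_to_def
proof (intro conjI allI impI ballI)
  fix d N j assume dvd: "\<forall>i\<in>A. N dvd (\<Sum>j\<in>B. G i j * d j)" and "j \<in> B"
  then obtain m0 where m0: "m0 < k" "j = \<beta> m0" using assms(2) by auto
  have "(\<Sum>j\<in>B. G (\<alpha> i) j * d j) = (\<Sum>m<k. G (\<alpha> i) (\<beta> m) * d (\<beta> m))" for i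
    using assms(2,3) by (simp add: sum.reindex)
  then have "N dvd (\<Sum>m<k. G (\<alpha> i) (\<beta> m) * d (\<beta> m))" if "i < r" for i
    using dvd that assms(1) by (metis image_eqI lessThan_iff)
  then have "N dvd (\<Sum>i<r. E m0 i * (\<Sum>m<k. G (\<alpha> i) (\<beta> m) * d (\<beta> m)))"
    by (intro dvd_sum) (simp add: dvd_mult)
  then show "N dvd D * d j" using inv m0 by simp
qed (use assms(4) in simp)

lemma rank_off_obtains_block:
  fixes s :: nat and M :: "nat \<Rightarrow> nat \<Rightarrow> real"
  assumes int_off: "\<And>i j. i < s \<Longrightarrow> j < s \<Longrightarrow> 2 * M i j \<in> \<int>" and rk: "rank_off s M \<ge> k"
  obtains A B G D where "A \<subseteq> {..<s}" and "B \<subseteq> {..<s}" and "A \<inter> B = {}" and "card B = k"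
    and "\<And>i j. i \<in> A \<Longrightarrow> j \<in> B \<Longrightarrow> 2 * M i j = of_int (G i j)" and "inj_mod_up_to A B G D"
proof -
  obtain r I J where IJ: "inj_on I {..<r}" "inj_on J {..<r}" "I ` {..<r} \<subseteq> {..<s}"
      "J ` {..<r} \<subseteq> {..<s}" "I ` {..<r} \<inter> J ` {..<r} = {}"
    and rank: "rank_off s M = vec_space.rank r (mat r r (\<lambda>(k, l). M (I k) (J l)))"
    by (rule rank_off_attained)
  define B0 :: "real mat" where "B0 = mat r r (\<lambda>(k, l). M (I k) (J l))"
  have "B0 \<in> carrier_mat r r" and "k \<le> vec_space.rank r B0" using rk rank by (simp_all add: B0_def)
  then obtain ls where ls: "inj_on ls {..<k}" "ls ` {..<k} \<subseteq> {..<r}"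
    and ker: "\<And>v. v \<in> carrier_vec k \<Longrightarrow> \<forall>i<r. (\<Sum>m<k. B0 $$ (i, ls m) * v $ m) = 0 \<Longrightarrow> v = 0\<^sub>v k"
    using vec_space.rank_ge_obtains_indep_cols[of B0 r r k] by auto
  define G where "G i j = \<lfloor>2 * M i j\<rfloor>" for i j
  have G: "2 * M i j = of_int (G i j)" if "i < s" "j < s" for i j
    using int_off[OF that] unfolding G_def by (auto elim!: Ints_cases)
  have IJs: "I i < s" "J (ls m) < s" if "i < r" "m < k" for i m
    using that IJ(3,4) ls(2) by (auto simp: image_subset_iff)
  have "B0 $$ (i, ls m) = of_int (G (I i) (J (ls m))) / 2" if "i < r" "m < k" for i m
    using G[OF IJs[OF that]] that ls(2) by (auto simp: B0_def image_subset_iff)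
  then have half: "(\<Sum>m<k. B0 $$ (i, ls m) * v $ m) = (\<Sum>m<k. of_int (G (I i) (J (ls m))) * v $ m) / 2"
    if "i < r" for i and v :: "real vec"
    unfolding sum_divide_distrib using that by (intro sum.cong refl) simp
  have int_ker: "v = 0\<^sub>v k"
    if "v \<in> carrier_vec k" "\<forall>i<r. (\<Sum>m<k. of_int (G (I i) (J (ls m))) * v $ m :: real) = 0" for v
    using that by (intro ker) (simp_all add: half)
  obtain D E where "D \<noteq> 0"
    and inv: "\<forall>m0<k. \<forall>\<delta>. (\<Sum>i<r. E m0 i * (\<Sum>m<k. G (I i) (J (ls m)) * \<delta> m)) = D * \<delta> m0"
    using int_mat_left_inverse_scaled[where F = "\<lambda>i m. G (I i) (J (ls m))", OF int_ker] by blast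
  define A where "A = I ` {..<r}"
  define B where "B = (\<lambda>m. J (ls m)) ` {..<k}"
  have injB: "inj_on (\<lambda>m. J (ls m)) {..<k}" using ls(1,2) IJ(2) by (auto simp: inj_on_def subset_iff)
  have "B \<subseteq> J ` {..<r}" using ls(2) unfolding B_def by auto
  then have sets: "A \<subseteq> {..<s}" "B \<subseteq> {..<s}" "A \<inter> B = {}"
    using IJ(3-5) unfolding A_def by auto
  have "card B = k" using injB unfolding B_def by (simp add: card_image)
  moreover have "2 * M i j = of_int (G i j)" if "i \<in> A" "j \<in> B" for i j
    using G sets(1,2) that by blast
  moreover have "inj_mod_up_to A B G D"
    using A_def B_def injB \<open>D \<noteq> 0\<close> inv by (rule inj_mod_up_to_of_left_inverse)
  ultimately show ?thesis by (rule that[OF sets])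
qed

lemma sqrt_bound_rearrange:
  fixes x q \<phi> w d :: real
  assumes x: "x > 0" and q: "q > 0" and "\<phi> > 0" and "w \<ge> 0" and "d \<ge> 0" and "n + m \<le> s"
  shows "q * (x ^ (s - n - m) * sqrt (x ^ (n + m) * q ^ n * (d * w\<^sup>2) ^ m)) / (x * \<phi>) ^ s
    = w ^ m / \<phi> ^ s * sqrt (d ^ m * q ^ (n + 2) / x ^ (n + m))"
proof -
  have "x ^ (n + m) * q ^ n * (d * w\<^sup>2) ^ m
      = (x ^ (n + m) * w ^ m / q)\<^sup>2 * (d ^ m * q ^ (n + 2) / x ^ (n + m))"
    using x q by (simp add: field_simps power_mult_distrib power2_eq_square power_add flip: power_mult)
  moreover have "0 \<le> x ^ (n + m) * w ^ m / q" using assms by simp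
  ultimately have sqrt_eq: "sqrt (x ^ (n + m) * q ^ n * (d * w\<^sup>2) ^ m)
      = x ^ (n + m) * w ^ m / q * sqrt (d ^ m * q ^ (n + 2) / x ^ (n + m))"
    by (simp only: real_sqrt_mult real_sqrt_abs abs_of_nonneg)
  have "q * (x ^ (s - n - m) * sqrt (x ^ (n + m) * q ^ n * (d * w\<^sup>2) ^ m))
      = (x ^ (s - n - m) * x ^ (n + m)) * (w ^ m * sqrt (d ^ m * q ^ (n + 2) / x ^ (n + m)))"
    unfolding sqrt_eq using q by (simp add: field_simps)
  also have "x ^ (s - n - m) * x ^ (n + m) = x ^ s"
    using assms(6) by (simp flip: power_add)
  finally show ?thesis
    using x by (simp add: power_mult_distrib)
qed

lemma sqrt_quotient_le_powr:
  fixes x c q d \<delta> :: real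
  assumes c: "c > 0" and q: "q > 0" and d: "d \<ge> 0" and x: "c * q powr (1 - \<delta>) \<le> x"
  shows "sqrt (d * q ^ (n + 2) / x ^ (n + m))
    \<le> sqrt (d / c ^ (n + m)) * q powr ((real n + 2 - (real n + real m) * (1 - \<delta>)) / 2)"
proof -
  have pos: "c * q powr (1 - \<delta>) > 0" using c q by simp
  then have "x > 0" using x by linarith
  have "(c * q powr (1 - \<delta>)) ^ (n + m) \<le> x ^ (n + m)" using x pos by (intro power_mono) auto
  then have "d * q ^ (n + 2) / x ^ (n + m) \<le> d * q ^ (n + 2) / (c * q powr (1 - \<delta>)) ^ (n + m)"
    using pos d q \<open>x > 0\<close> by (intro divide_left_mono) auto
  also have "\<dots> = d / c ^ (n + m) * (q powr (real n + 2) / q powr ((real n + real m) * (1 - \<delta>)))"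
    using q powr_realpow[OF q, of "n + 2"] by (simp add: power_mult_distrib powr_power ac_simps)
  also have "\<dots> = d / c ^ (n + m) * q powr (real n + 2 - (real n + real m) * (1 - \<delta>))"
    by (simp add: powr_diff)
  finally have "sqrt (d * q ^ (n + 2) / x ^ (n + m))
      \<le> sqrt (d / c ^ (n + m) * q powr (real n + 2 - (real n + real m) * (1 - \<delta>)))"
    by (rule real_sqrt_le_mono)
  also have "\<dots> = sqrt (d / c ^ (n + m)) * sqrt (q powr (real n + 2 - (real n + real m) * (1 - \<delta>)))"
    by (rule real_sqrt_mult)
  also have "sqrt (q powr (real n + 2 - (real n + real m) * (1 - \<delta>)))
      = q powr ((real n + 2 - (real n + real m) * (1 - \<delta>)) / 2)"
    using q by (simp add: powr_half_sqrt[symmetric] powr_powr)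
  finally show ?thesis .
qed

lemma norm_B_star_le:
  assumes symm: "\<And>i j. i < s \<Longrightarrow> j < s \<Longrightarrow> M i j = M j i"
    and A: "A \<subseteq> {..<s}" and B: "B \<subseteq> {..<s}" and AB: "A \<inter> B = {}"
    and G: "\<And>i j. i \<in> A \<Longrightarrow> j \<in> B \<Longrightarrow> 2 * M i j = of_int (G i j)"
    and D: "inj_mod_up_to A B G D"
    and q: "q > 0" and W: "W > 0" and b: "coprime b (int W)"
  shows "norm (B_star s M W b q) \<le> real W ^ card B / real (totient W) ^ s *
    sqrt (real_of_int \<bar>D\<bar> ^ card B * real q ^ (card A + 2)
          / real (card (admissible q W b)) ^ (card A + card B))"
proof -
  define \<xi> where "\<xi> = real (card (admissible q W b))"
  define bound where "bound = \<xi> ^ (s - card A - card B) *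
    sqrt (\<xi> ^ (card A + card B) * real q ^ card A * (real_of_int \<bar>D\<bar> * real W ^ 2) ^ card B)"
  define units where "units = {a. 1 \<le> a \<and> a \<le> int q \<and> coprime a (int q)}"
  have "0 < totient q" using q by simp
  then have \<xi>: "\<xi> > 0" using totient_le_card_admissible[OF q W b] unfolding \<xi>_def by linarith
  have "card (A \<union> B) \<le> s" using card_mono[of "{..<s}" "A \<union> B"] A B by auto
  then have "card A + card B \<le> s" using AB A B by (simp add: card_Un_disjoint finite_subset)
  have "card units \<le> card {1..int q}" unfolding units_def by (intro card_mono) auto
  then have "card units \<le> q" by simp
  have "norm (\<Sum>a\<in>units. S_star s M W b q a) \<le> (\<Sum>a\<in>units. bound)"
    unfolding bound_def \<xi>_def units_def
    by (rule order.trans[OF norm_sum sum_mono]) (rule norm_S_star_le[OF symm A B AB G D q W]; simp)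
  also have "\<dots> \<le> real q * bound"
    using \<open>card units \<le> q\<close> \<xi> by (simp add: bound_def mult_right_mono)
  finally have "norm (B_star s M W b q) \<le> real q * bound / real (totient (q * W)) ^ s"
    unfolding B_star_def units_def[symmetric] by (simp add: norm_divide norm_power divide_right_mono)
  also have "real (totient (q * W)) = \<xi> * real (totient W)"
    unfolding \<xi>_def using card_admissible[OF q W b] by (metis of_nat_mult)
  also have "real q * bound / (\<xi> * real (totient W)) ^ s = real W ^ card B / real (totient W) ^ s *
      sqrt (real_of_int \<bar>D\<bar> ^ card B * real q ^ (card A + 2) / \<xi> ^ (card A + card B))"
    unfolding bound_def using \<xi> q W \<open>card A + card B \<le> s\<close>
    by (intro sqrt_bound_rearrange) auto
  finally show ?thesis unfolding \<xi>_def .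
qed

lemma B_star_bound_from_block:
  fixes \<epsilon> :: real
  assumes symm: "\<And>i j. i < s \<Longrightarrow> j < s \<Longrightarrow> M i j = M j i"
    and A: "A \<subseteq> {..<s}" and B: "B \<subseteq> {..<s}" and AB: "A \<inter> B = {}" and "B \<noteq> {}"
    and G: "\<And>i j. i \<in> A \<Longrightarrow> j \<in> B \<Longrightarrow> 2 * M i j = of_int (G i j)"
    and D: "inj_mod_up_to A B G D" and "\<epsilon> > 0"
  obtains C where "\<And>W q b. W > 0 \<Longrightarrow> q > 0 \<Longrightarrow> coprime b (int W) \<Longrightarrow>
    norm (B_star s M W b q)
      \<le> C * real W ^ card B / real (totient W) ^ s * real q powr (1 - real (card B) / 2 + \<epsilon>)"
proof -
  have "card B > 0" using \<open>B \<noteq> {}\<close> B by (simp add: card_gt_0_iff finite_subset)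
  define \<delta> where "\<delta> = 2 * \<epsilon> / (real (card A) + real (card B))"
  have "\<delta> > 0" using \<open>\<epsilon> > 0\<close> \<open>card B > 0\<close> unfolding \<delta>_def by simp
  then obtain c where c: "c > 0" "\<And>n. n > 0 \<Longrightarrow> c * real n powr (1 - \<delta>) \<le> real (totient n)"
    using totient_ge_powr by auto
  have exponent: "(real (card A) + 2 - (real (card A) + real (card B)) * (1 - \<delta>)) / 2
      = 1 - real (card B) / 2 + \<epsilon>"
    using \<open>card B > 0\<close> unfolding \<delta>_def by (simp add: field_simps)
  define C where "C = sqrt (real_of_int \<bar>D\<bar> ^ card B / c ^ (card A + card B))"
  have "norm (B_star s M W b q)
      \<le> C * real W ^ card B / real (totient W) ^ s * real q powr (1 - real (card B) / 2 + \<epsilon>)"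
    if W: "W > 0" and q: "q > 0" and b: "coprime b (int W)" for W q b
  proof -
    have "c * real q powr (1 - \<delta>) \<le> real (card (admissible q W b))"
      using c(2)[OF q] totient_le_card_admissible[OF q W b] by (meson of_nat_le_iff order.trans)
    from sqrt_quotient_le_powr[OF c(1) _ _ this, of "real_of_int \<bar>D\<bar> ^ card B" "card A" "card B"]
    have "sqrt (real_of_int \<bar>D\<bar> ^ card B * real q ^ (card A + 2)
          / real (card (admissible q W b)) ^ (card A + card B))
        \<le> C * real q powr (1 - real (card B) / 2 + \<epsilon>)"
      using q exponent unfolding C_def by simp
    with norm_B_star_le[OF symm A B AB G D q W b]
    have "norm (B_star s M W b q)
        \<le> real W ^ card B / real (totient W) ^ s * (C * real q powr (1 - real (card B) / 2 + \<epsilon>))"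
      by (rule order.trans[OF _ mult_left_mono]) (simp_all add: zero_le_divide_iff)
    then show ?thesis by (simp add: ac_simps)
  qed
  then show ?thesis by (rule that)
qed

theorem lemma2p5:
  fixes s :: nat and M :: "nat \<Rightarrow> nat \<Rightarrow> real"
  assumes symm: "\<And>i j. i < s \<Longrightarrow> j < s \<Longrightarrow> M i j = M j i"
    and int_diag: "\<And>i. i < s \<Longrightarrow> M i i \<in> \<int>"
    and int_off: "\<And>i j. i < s \<Longrightarrow> j < s \<Longrightarrow> 2 * M i j \<in> \<int>"
    and rk: "rank_off s M \<ge> 5"
  shows "\<forall>\<epsilon>>0. \<exists>C. \<forall>W q :: nat. \<forall>b :: int. W > 0 \<longrightarrow> q > 0 \<longrightarrow> coprime b (int W) \<longrightarrow>
           norm (B_star s M W b q)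
             \<le> C * real W ^ 5 / real (totient W) ^ s * real q powr (-3/2 + \<epsilon>)"
proof (intro allI impI)
  \<comment> \<open>Only the off-diagonal block of M enters.\<close>
  fix \<epsilon> :: real assume "\<epsilon> > 0"
  obtain A B G D where A: "A \<subseteq> {..<s}" and B: "B \<subseteq> {..<s}" and AB: "A \<inter> B = {}"
    and card_B: "card B = 5" and G: "\<And>i j. i \<in> A \<Longrightarrow> j \<in> B \<Longrightarrow> 2 * M i j = of_int (G i j)"
    and D: "inj_mod_up_to A B G D"
    using rank_off_obtains_block[OF int_off rk] by blast
  have "B \<noteq> {}" using card_B by auto
  obtain C where "\<And>W q b. W > 0 \<Longrightarrow> q > 0 \<Longrightarrow> coprime b (int W) \<Longrightarrow>
      norm (B_star s M W b q)
        \<le> C * real W ^ card B / real (totient W) ^ s * real q powr (1 - real (card B) / 2 + \<epsilon>)"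
    using B_star_bound_from_block[OF symm A B AB \<open>B \<noteq> {}\<close> G D \<open>\<epsilon> > 0\<close>] by blast
  then show "\<exists>C. \<forall>W q :: nat. \<forall>b :: int. W > 0 \<longrightarrow> q > 0 \<longrightarrow> coprime b (int W) \<longrightarrow>
      norm (B_star s M W b q) \<le> C * real W ^ 5 / real (totient W) ^ s * real q powr (-3/2 + \<epsilon>)"
    unfolding card_B by (intro exI[of _ C]) simp
qed

end
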